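(* For every $n\ge1$, $$\tilde S^{\,n-1}_{e_0}\big(e_+(z)\big)=\prod_{k=2}^n\big(1-q^{-2(k-1)}\big)\,e_+(z)^n,\qquad S^{\,n-1}_{e_0}\big(e_-(z)\big)=\prod_{k=2}^n\big(1-q^{2(k-1)}\big)\,e_-(z)^n,$$ $$S^{\,n-1}_{f_0}\big(f_+(z)\big)=\prod_{k=2}^n\big(q^{-2(k-1)}-1\big)\,f_+(z)^n,\qquad \tilde S^{\,n-1}_{f_0}\big(f_-(z)\big)=\prod_{k=2}^n\big(q^{2(k-1)}-1\big)\,f_-(z)^n.$$
   Context: $U=U_q(\widehat{\mathfrak{sl}}_2)$ in the Drinfeld new realization: currents $e(z)=\sum_ne_nz^{-n}$, $f(z)=\sum_nf_nz^{-n}$ with $(z-q^2w)e(z)e(w)=(q^2z-w)e(w)e(z)$, $(z-q^{-2}w)f(z)f(w)=(q^{-2}z-w)f(w)f(z)$, and $k=\psi^+_0$ with $ke_nk^{-1}=q^2e_n$, $kf_nk^{-1}=q^{-2}f_n$; $q$ not a root of unity. Half-currents: $e_+(z)=\sum_{n\ge0}e_nz^{-n}$, $e_-(z)=-\sum_{n<0}e_nz^{-n}$, $f_+(z)=\sum_{n>0}f_nz^{-n}$, $f_-(z)=-\sum_{n\le0}f_nz^{-n}$; $e_\pm(z)^n$, $f_\pm(z)^n$ are powers as formal series. Screening operators (applied coefficientwise): $S_{e_0}(x)=e_0x-kxk^{-1}e_0$, $S_{f_0}(x)=xf_0-f_0kxk^{-1}$, $\tilde S_{e_0}(x)=xe_0-e_0k^{-1}xk$,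 $\tilde S_{f_0}(x)=f_0x-k^{-1}xkf_0$. Empty products equal $1$. *)

theory Defs
  imports "HOL-Computational_Algebra.Formal_Power_Series"
begin

definition central_scalars :: "('k::field \<Rightarrow> 'a::ring_1) \<Rightarrow> bool" where
  "central_scalars sc \<longleftrightarrow>
     (\<forall>x y. sc (x + y) = sc x + sc y) \<and> (\<forall>x y. sc (x * y) = sc x * sc y) \<and>
     sc 1 = 1 \<and> (\<forall>x a. sc x * a = a * sc x)"

definition fps_cmap :: "('a \<Rightarrow> 'b) \<Rightarrow> 'a fps \<Rightarrow> 'b fps" where
  "fps_cmap g X = Abs_fps (\<lambda>i. g (fps_nth X i))"

text \<open>Half currents. e_+ and f_+ are power series in z^{-1}; e_- and f_- are
  power series in z. The coefficient at index j is the coefficient of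
  z^{-j} (resp. z^{j}).\<close>
definition e_plus :: "(int \<Rightarrow> 'a::ring_1) \<Rightarrow> 'a fps" where
  "e_plus e = Abs_fps (\<lambda>j. e (int j))"
definition e_minus :: "(int \<Rightarrow> 'a::ring_1) \<Rightarrow> 'a fps" where
  "e_minus e = Abs_fps (\<lambda>j. if j = 0 then 0 else - e (- int j))"
definition f_plus :: "(int \<Rightarrow> 'a::ring_1) \<Rightarrow> 'a fps" where
  "f_plus f = Abs_fps (\<lambda>j. if j = 0 then 0 else f (int j))"
definition f_minus :: "(int \<Rightarrow> 'a::ring_1) \<Rightarrow> 'a fps" where
  "f_minus f = Abs_fps (\<lambda>j. - f (- int j))"

definition S_e0 :: "(int \<Rightarrow> 'a::ring_1) \<Rightarrow> 'a \<Rightarrow> 'a \<Rightarrow> 'a \<Rightarrow> 'a" where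
  "S_e0 e k kinv x = e 0 * x - k * x * kinv * e 0"
definition S_f0 :: "(int \<Rightarrow> 'a::ring_1) \<Rightarrow> 'a \<Rightarrow> 'a \<Rightarrow> 'a \<Rightarrow> 'a" where
  "S_f0 f k kinv x = x * f 0 - f 0 * k * x * kinv"
definition St_e0 :: "(int \<Rightarrow> 'a::ring_1) \<Rightarrow> 'a \<Rightarrow> 'a \<Rightarrow> 'a \<Rightarrow> 'a" where
  "St_e0 e k kinv x = x * e 0 - e 0 * kinv * x * k"
definition St_f0 :: "(int \<Rightarrow> 'a::ring_1) \<Rightarrow> 'a \<Rightarrow> 'a \<Rightarrow> 'a \<Rightarrow> 'a" where
  "St_f0 f k kinv x = f 0 * x - kinv * x * k * f 0"

end

theory Submission
  imports Defs
begin

text \<open>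
  Each screening operator is a twisted commutator \<open>x \<mapsto> b x - (a x a') b\<close> or its
  mirror image \<open>x \<mapsto> x b - b (a x a')\<close>, where \<open>b\<close> is the zero mode \<open>e\<^sub>0\<close> or \<open>f\<^sub>0\<close>
  and conjugation by \<open>a = k\<^sup>\<plusminus>\<^sup>1\<close> multiplies the half current \<open>X\<close> by \<open>r = q\<^sup>\<plusminus>\<^sup>2\<close>.
  Summing the exchange relation along an antidiagonal gives the q-commutation relation
  \<open>b X - r X b = c (1 - r) X\<^sup>2\<close> with \<open>c = \<plusminus>1\<close> (or its mirror image): the relation makes
  the antidiagonal sum antisymmetric under a reflection, so everything cancels except
  the term containing the zero mode, once 2 is invertible. By induction,
  \<open>b X\<^sup>m - r\<^sup>m X\<^sup>m b = c (1 - r\<^sup>m) X\<^sup>m\<^sup>+\<^sup>1\<close>, i.e. the screening operator sends \<open>X\<^sup>m\<close>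
  to \<open>c (1 - r\<^sup>m) X\<^sup>m\<^sup>+\<^sup>1\<close>, and iterating it produces the product. The currents in \<open>z\<close>
  (\<open>e\<^sub>-\<close>, \<open>f\<^sub>-\<close>) reduce to those in \<open>z\<^sup>-\<^sup>1\<close> by reversing the mode index, which
  inverts \<open>Q\<close> in the exchange relation.
\<close>

unbundle fps_syntax

definition q_commutator :: "'a \<Rightarrow> 'a \<Rightarrow> 'a \<Rightarrow> 'a::ring_1" where
  "q_commutator r a b = a * b - r * b * a"

lemma q_commutator_swap:
  assumes "p * r = 1"
  shows "q_commutator p b a = - (p * q_commutator r a b)"
  using assms by (simp add: q_commutator_def right_diff_distrib mult.assoc flip: mult.assoc)

lemma q_commutator_uminus_right: "q_commutator r a (- b) = - q_commutator r a b"
  by (simp add: q_commutator_def)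

lemma left_commute_of_commute:
  fixes x y :: "'a::semigroup_mult"
  assumes "x * y = y * x"
  shows "x * (y * z) = y * (x * z)"
  by (simp add: assms flip: mult.assoc)

lemma power_mult_distrib_commuting:
  fixes r x :: "'a::monoid_mult"
  assumes "r * x = x * r"
  shows "(r * x) ^ n = r ^ n * x ^ n"
proof (induction n)
  case (Suc n)
  have "x * (r ^ n * z) = r ^ n * (x * z)" for z
    using power_commuting_commutes[of r x n] assms by (simp add: left_commute_of_commute)
  with Suc.IH show ?case
    by (simp add: mult.assoc)
qed simp

lemma conjugate_power:
  fixes a a' x :: "'a::monoid_mult"
  assumes "a * a' = 1" "a' * a = 1"
  shows "a * x ^ n * a' = (a * x * a') ^ n"
proof (induction n)
  case (Suc n)
  have cancel: "a' * (a * z) = z" for z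
    using assms(2) by (simp flip: mult.assoc)
  have "a * x ^ Suc n * a' = (a * x ^ n * a') * (a * x * a')"
    by (simp only: power_Suc2 mult.assoc cancel)
  with Suc show ?case by (simp only: power_Suc2)
qed (simp add: assms(1))

lemma q_commutator_power_Suc_left:
  fixes b x r :: "'a::ring_1"
  assumes "r * x = x * r"
  shows "q_commutator (r ^ Suc n) b (x ^ Suc n)
           = q_commutator (r ^ n) b (x ^ n) * x + r ^ n * x ^ n * q_commutator r b x"
proof -
  have "x ^ n * (r * z) = r * (x ^ n * z)" for z
    using power_commuting_commutes[of x r n] assms by (simp flip: mult.assoc)
  then show ?thesis
    unfolding q_commutator_def power_Suc2 by (simp add: algebra_simps)
qed

lemma q_commutator_power_Suc_right:
  fixes b x r :: "'a::ring_1"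
  assumes "r * x = x * r"
  shows "q_commutator (r ^ Suc n) (x ^ Suc n) b
           = x * q_commutator (r ^ n) (x ^ n) b + r ^ n * q_commutator r x b * x ^ n"
proof -
  have "x * (r ^ n * z) = r ^ n * (x * z)" for z
    using power_commuting_commutes[of r x n] assms by (simp flip: mult.assoc)
  moreover have "r ^ n * (r * z) = r * (r ^ n * z)" for z
    by (simp add: power_commutes flip: mult.assoc)
  ultimately show ?thesis
    unfolding q_commutator_def power_Suc by (simp add: algebra_simps)
qed

lemma q_commutator_power_left:
  fixes b x r c :: "'a::ring_1"
  assumes rx: "r * x = x * r" and cx: "c * x = x * c" and cr: "c * r = r * c"
    and base: "q_commutator r b x = c * (1 - r) * x ^ 2"
  shows "q_commutator (r ^ n) b (x ^ n) = c * (1 - r ^ n) * x ^ Suc n"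
proof (induction n)
  case (Suc n)
  have "x ^ n * (1 - r) = (1 - r) * x ^ n"
    using power_commuting_commutes[of x r n] rx by (simp add: algebra_simps)
  moreover have "x ^ n * c = c * x ^ n"
    using power_commuting_commutes[of x c n] cx by simp
  ultimately have "r ^ n * x ^ n * (c * (1 - r) * x ^ 2) = r ^ n * (c * (1 - r)) * (x ^ n * x ^ 2)"
    by (simp only: mult.assoc left_commute_of_commute)
  also have "r ^ n * (c * (1 - r)) = c * (r ^ n * (1 - r))"
    using power_commuting_commutes[of r c n] cr by (simp add: left_commute_of_commute)
  also have "r ^ n * (1 - r) = r ^ n - r ^ Suc n"
    by (simp add: right_diff_distrib power_commutes)
  also have "x ^ n * x ^ 2 = x ^ Suc (Suc n)"
    by (simp flip: power_add)
  finally have twist: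
    "r ^ n * x ^ n * (c * (1 - r) * x ^ 2) = c * (r ^ n - r ^ Suc n) * x ^ Suc (Suc n)" .
  have "q_commutator (r ^ Suc n) b (x ^ Suc n)
      = q_commutator (r ^ n) b (x ^ n) * x + r ^ n * x ^ n * q_commutator r b x"
    by (rule q_commutator_power_Suc_left[OF rx])
  also have "\<dots> = c * (1 - r ^ n) * x ^ Suc (Suc n)
      + c * (r ^ n - r ^ Suc n) * x ^ Suc (Suc n)"
    unfolding Suc.IH base twist by (simp only: mult.assoc power_Suc2)
  also have "\<dots> = c * (1 - r ^ Suc n) * x ^ Suc (Suc n)"
    by (simp add: algebra_simps)
  finally show ?case .
qed (simp add: q_commutator_def)

lemma q_commutator_power_right:
  fixes b x r c :: "'a::ring_1"
  assumes rx: "r * x = x * r" and cx: "c * x = x * c" and cr: "c * r = r * c"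
    and base: "q_commutator r x b = c * (1 - r) * x ^ 2"
  shows "q_commutator (r ^ n) (x ^ n) b = c * (1 - r ^ n) * x ^ Suc n"
proof (induction n)
  case (Suc n)
  have "x * (1 - r ^ n) = (1 - r ^ n) * x"
    using power_commuting_commutes[of r x n] rx by (simp add: algebra_simps)
  then have shift: "x * (c * (1 - r ^ n) * x ^ Suc n) = c * (1 - r ^ n) * x ^ Suc (Suc n)"
    using cx by (simp only: mult.assoc left_commute_of_commute power_Suc)
  have "r ^ n * (c * (1 - r) * x ^ 2) * x ^ n = r ^ n * (c * (1 - r)) * (x ^ 2 * x ^ n)"
    by (simp only: mult.assoc)
  also have "r ^ n * (c * (1 - r)) = c * (r ^ n - r ^ Suc n)"
    using power_commuting_commutes[of r c n] cr
    by (simp add: left_commute_of_commute right_diff_distrib power_commutes)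
  also have "x ^ 2 * x ^ n = x ^ Suc (Suc n)"
    by (simp flip: power_add)
  finally have twist:
    "r ^ n * (c * (1 - r) * x ^ 2) * x ^ n = c * (r ^ n - r ^ Suc n) * x ^ Suc (Suc n)" .
  have "q_commutator (r ^ Suc n) (x ^ Suc n) b
      = c * (1 - r ^ n) * x ^ Suc (Suc n) + c * (r ^ n - r ^ Suc n) * x ^ Suc (Suc n)"
    unfolding q_commutator_power_Suc_right[OF rx] Suc.IH base shift twist ..
  also have "\<dots> = c * (1 - r ^ Suc n) * x ^ Suc (Suc n)"
    by (simp add: algebra_simps)
  finally show ?case .
qed (simp add: q_commutator_def)

text \<open>The coefficient of \<open>z\<^sup>-\<^sup>m w\<^sup>-\<^sup>l\<close> in
  \<open>(z - Q w) g(z) g(w) = (Q z - w) g(w) g(z)\<close>, where \<open>g(z) = \<Sum>\<^sub>n g\<^sub>n z\<^sup>-\<^sup>n\<close>.\<close>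

definition quadratic_exchange :: "'a::ring_1 \<Rightarrow> (int \<Rightarrow> 'a) \<Rightarrow> bool" where
  "quadratic_exchange Q g \<longleftrightarrow>
     (\<forall>m l. g (m + 1) * g l - Q * g m * g (l + 1) = Q * g l * g (m + 1) - g (l + 1) * g m)"

lemma quadratic_exchange_reflect:
  assumes "quadratic_exchange Q g" and "P * Q = 1"
  shows "quadratic_exchange P (\<lambda>m. g (- m))"
  unfolding quadratic_exchange_def
proof (intro allI)
  fix m l :: int
  have "g (- l) * g (- m - 1) - Q * g (- l - 1) * g (- m)
      = Q * g (- m - 1) * g (- l) - g (- m) * g (- l - 1)"
    using assms(1) unfolding quadratic_exchange_def by (metis diff_add_cancel)
  then have "P * (g (- l) * g (- m - 1) - Q * g (- l - 1) * g (- m))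
      = P * (Q * g (- m - 1) * g (- l) - g (- m) * g (- l - 1))"
    by simp
  then show "g (- (m + 1)) * g (- l) - P * g (- m) * g (- (l + 1))
      = P * g (- l) * g (- (m + 1)) - g (- (l + 1)) * g (- m)"
    by (simp add: right_diff_distrib assms(2) flip: mult.assoc)
qed

lemma quadratic_exchange_q_commutator:
  assumes "quadratic_exchange Q g"
  shows "q_commutator Q (g (m + 1)) (g l) = - q_commutator Q (g (l + 1)) (g m)"
proof -
  have "g (m + 1) * g l - Q * g m * g (l + 1) = Q * g l * g (m + 1) - g (l + 1) * g m"
    using assms unfolding quadratic_exchange_def by blast
  then show ?thesis
    unfolding q_commutator_def by (simp add: algebra_simps)
qed

lemma antidiagonal_q_commutator_sum_eq_0:
  fixes g :: "int \<Rightarrow> 'a::ring_1"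
  assumes "quadratic_exchange Q g"
    and no_2_torsion: "\<And>x::'a. x + x = 0 \<Longrightarrow> x = 0"
  shows "(\<Sum>i=1..j. q_commutator Q (g (int i)) (g (int j - int i))) = 0"
proof -
  let ?C = "\<lambda>i. q_commutator Q (g (int i)) (g (int j - int i))"
  \<comment> \<open>the exchange relation says \<open>?C (j + 1 - i) = - ?C i\<close>\<close>
  have "sum ?C {1..j} = sum (\<lambda>i. ?C (j + 1 - i)) {1..j}"
    by (rule sum.atLeastAtMost_rev)
  also have "\<dots> = sum (\<lambda>i. - ?C i) {1..j}"
  proof (rule sum.cong)
    fix i assume "i \<in> {1..j}"
    then show "?C (j + 1 - i) = - ?C i"
      using quadratic_exchange_q_commutator[OF assms(1), of "int i - 1" "int j - int i"]
      by (simp add: algebra_simps)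
  qed simp
  finally have "sum ?C {1..j} + sum ?C {1..j} = 0"
    by (simp add: sum_negf eq_neg_iff_add_eq_0)
  then show ?thesis by (rule no_2_torsion)
qed

lemma e_plus_q_commutator:
  fixes g :: "int \<Rightarrow> 'a::ring_1"
  assumes "quadratic_exchange Q g" and "\<And>x::'a. x + x = 0 \<Longrightarrow> x = 0"
  shows "q_commutator (fps_const Q) (fps_const (g 0)) (e_plus g) = fps_const (1 - Q) * e_plus g ^ 2"
proof (rule fps_ext)
  fix j
  let ?C = "\<lambda>i. q_commutator Q (g (int i)) (g (int j - int i))"
  have square: "(e_plus g ^ 2) $ j = (\<Sum>i=0..j. g (int i) * g (int j - int i))"
    by (auto simp: power2_eq_square fps_mult_nth e_plus_def intro: sum.cong)
  have square_rev: "(\<Sum>i=0..j. g (int j - int i) * g (int i)) = (e_plus g ^ 2) $ j"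
    unfolding square
    by (subst sum.atLeastAtMost_rev) (auto intro: sum.cong)
  have "q_commutator Q (g 0) (g (int j)) = sum ?C {0..j}"
    using antidiagonal_q_commutator_sum_eq_0[OF assms, of j]
    by (simp add: sum.atLeast_Suc_atMost)
  also have "\<dots> = (1 - Q) * (e_plus g ^ 2) $ j"
    by (simp add: q_commutator_def sum_subtractf mult.assoc square square_rev
        left_diff_distrib flip: sum_distrib_left)
  finally show "q_commutator (fps_const Q) (fps_const (g 0)) (e_plus g) $ j
      = (fps_const (1 - Q) * e_plus g ^ 2) $ j"
    by (simp add: q_commutator_def e_plus_def)
qed

lemma f_plus_q_commutator:
  fixes g :: "int \<Rightarrow> 'a::ring_1"
  assumes "quadratic_exchange Q g" and "\<And>x::'a. x + x = 0 \<Longrightarrow> x = 0"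
  shows "q_commutator (fps_const Q) (f_plus g) (fps_const (g 0)) = fps_const (Q - 1) * f_plus g ^ 2"
proof -
  define X B R where "X = e_plus g" and "B = fps_const (g 0)" and "R = fps_const Q"
  have "f_plus g = X - B"
    by (rule fps_ext) (simp add: f_plus_def X_def e_plus_def B_def)
  moreover have "q_commutator R B X = (1 - R) * X ^ 2"
    using e_plus_q_commutator[OF assms] by (simp add: X_def B_def R_def flip: fps_const_sub)
  moreover have "q_commutator R (X - B) B - (R - 1) * (X - B) ^ 2
      = (1 - R) * X ^ 2 - q_commutator R B X"
    by (simp add: q_commutator_def algebra_simps power2_eq_square)
  ultimately show ?thesis
    by (simp add: B_def R_def flip: fps_const_sub)
qed

lemma fps_cmap_screening_left:
  fixes a a' b :: "'a::ring_1"
  shows "fps_cmap (\<lambda>x. b * x - a * x * a' * b) Y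
     = fps_const b * Y - fps_const a * Y * fps_const a' * fps_const b"
  by (rule fps_ext) (simp add: fps_cmap_def)

lemma fps_cmap_screening_right:
  fixes a a' b :: "'a::ring_1"
  shows "fps_cmap (\<lambda>x. x * b - b * a * x * a') Y
     = Y * fps_const b - fps_const b * fps_const a * Y * fps_const a'"
  by (rule fps_ext) (simp add: fps_cmap_def)

locale central_scalar_algebra =
  fixes sc :: "'k::field \<Rightarrow> 'a::ring_1"
  assumes central_scalars: "central_scalars sc"
begin

lemma sc_add [simp]: "sc (x + y) = sc x + sc y"
  and sc_mult [simp]: "sc (x * y) = sc x * sc y"
  and sc_1 [simp]: "sc 1 = 1"
  and sc_commute: "sc x * a = a * sc x"
  using central_scalars unfolding central_scalars_def by blast+

lemma sc_0 [simp]: "sc 0 = 0"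
  using sc_add[of 0 0] by simp

lemma sc_minus [simp]: "sc (- x) = - sc x"
  using sc_add[of x "- x"] by (simp add: minus_unique)

lemma sc_diff [simp]: "sc (x - y) = sc x - sc y"
  using sc_add[of x "- y"] by simp

lemma sc_power [simp]: "sc (x ^ n) = sc x ^ n"
  by (induction n) simp_all

lemma sc_left_commute: "a * (sc x * b) = sc x * (a * b)"
  by (metis mult.assoc sc_commute)

lemma fps_const_sc_commute: "fps_const (sc x) * Y = Y * fps_const (sc x)"
  by (rule fps_ext) (simp only: fps_mult_left_const_nth fps_mult_right_const_nth sc_commute)

lemma sc_inverse_mult: "x \<noteq> 0 \<Longrightarrow> sc (inverse x) * sc x = 1"
  by (metis sc_1 sc_mult left_inverse)

lemma add_self_eq_0:
  fixes a :: 'a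
  assumes "(2::'k) \<noteq> 0" and "a + a = 0"
  shows "a = 0"
proof -
  have "inverse 2 + inverse 2 = (1::'k)"
    using assms(1) by (metis mult_2 right_inverse)
  then have "a = sc (inverse 2 + inverse 2) * a"
    by simp
  also have "\<dots> = sc (inverse 2) * (a + a)"
    by (simp only: sc_add distrib_left distrib_right)
  finally show ?thesis
    using assms(2) by simp
qed

lemma conjugate_eigen_inverse:
  assumes "a * a' = 1" "a' * a = 1" "\<rho> \<noteq> 0" "a * x * a' = sc \<rho> * x"
  shows "a' * x * a = sc (inverse \<rho>) * x"
proof -
  have "sc (inverse \<rho>) * x = sc (inverse \<rho>) * (a' * (a * x * a') * a)"
    using assms(2) by (simp add: mult.assoc flip: mult.assoc[of a'])
  also have "\<dots> = a' * x * a"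
    using assms(3,4)
    by (simp add: sc_left_commute[of a'] mult.assoc sc_inverse_mult
        flip: mult.assoc[of "sc (inverse \<rho>)"])
  finally show ?thesis ..
qed

lemma conjugate_power_eigen:
  assumes "a * a' = 1" "a' * a = 1"
    and "fps_const a * X * fps_const a' = fps_const (sc \<rho>) * X"
  shows "fps_const a * X ^ m * fps_const a' = fps_const (sc \<rho>) ^ m * X ^ m"
proof -
  have "fps_const a * X ^ m * fps_const a' = (fps_const (sc \<rho>) * X) ^ m"
    using conjugate_power[of "fps_const a" "fps_const a'"] assms by simp
  also have "\<dots> = fps_const (sc \<rho>) ^ m * X ^ m"
    by (rule power_mult_distrib_commuting[OF fps_const_sc_commute])
  finally show ?thesis .
qed

lemma q_commutator_swap_sc:
  assumes "\<rho>' * \<rho> = 1"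
    and "q_commutator (fps_const (sc \<rho>)) A B = fps_const (sc c) * Z"
  shows "q_commutator (fps_const (sc \<rho>')) B A = fps_const (sc (- (\<rho>' * c))) * Z"
proof -
  have "fps_const (sc \<rho>') * fps_const (sc \<rho>) = 1"
    by (simp flip: sc_mult add: assms(1))
  then show ?thesis
    by (simp add: q_commutator_swap assms(2) flip: fps_const_neg fps_const_mult mult.assoc)
qed

lemma neg_fps_const_sc_mult: "- (fps_const (sc c) * Z) = fps_const (sc (- c)) * Z"
  by (simp flip: fps_const_neg)

lemma funpow_power_raising:
  fixes T :: "'a fps \<Rightarrow> 'a fps"
  assumes linear: "\<And>c Y. T (fps_const (sc c) * Y) = fps_const (sc c) * T Y"
    and step: "\<And>m. m \<ge> 1 \<Longrightarrow> T (X ^ m) = fps_const (sc (d m)) * X ^ Suc m"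
    and "n \<ge> 1"
  shows "(T ^^ (n - 1)) X = fps_const (sc (\<Prod>j=2..n. d (j - 1))) * X ^ n"
proof -
  have "(T ^^ m) X = fps_const (sc (\<Prod>j=2..Suc m. d (j - 1))) * X ^ Suc m" for m
  proof (induction m)
    case (Suc m)
    define P where "P = (\<Prod>j=2..Suc m. d (j - 1))"
    have "(T ^^ Suc m) X = fps_const (sc P) * T (X ^ Suc m)"
      by (simp only: funpow.simps comp_apply Suc.IH linear P_def)
    also have "T (X ^ Suc m) = fps_const (sc (d (Suc m))) * X ^ Suc (Suc m)"
      by (rule step) simp
    also have "fps_const (sc P) * (fps_const (sc (d (Suc m))) * X ^ Suc (Suc m))
        = fps_const (sc (P * d (Suc m))) * X ^ Suc (Suc m)"
      by (simp add: mult.assoc flip: fps_const_mult)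
    finally show ?case
      by (simp add: P_def)
  qed simp
  from this[of "n - 1"] show ?thesis
    using \<open>n \<ge> 1\<close> by simp
qed

lemma fps_cmap_screening_left_linear:
  "fps_cmap (\<lambda>x. b * x - a * x * a' * b) (fps_const (sc c) * Y)
     = fps_const (sc c) * fps_cmap (\<lambda>x. b * x - a * x * a' * b) Y"
  by (rule fps_ext)
    (simp add: fps_cmap_def right_diff_distrib mult.assoc sc_left_commute[of a] sc_left_commute[of b])

lemma fps_cmap_screening_right_linear:
  "fps_cmap (\<lambda>x. x * b - b * a * x * a') (fps_const (sc c) * Y)
     = fps_const (sc c) * fps_cmap (\<lambda>x. x * b - b * a * x * a') Y"
  by (rule fps_ext)
    (simp add: fps_cmap_def right_diff_distrib mult.assoc sc_left_commute[of a] sc_left_commute[of b])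

theorem funpow_screening_left:
  assumes "a * a' = 1" "a' * a = 1"
    and conj: "fps_const a * X * fps_const a' = fps_const (sc \<rho>) * X"
    and base: "q_commutator (fps_const (sc \<rho>)) (fps_const b) X
                 = fps_const (sc (\<gamma> * (1 - \<rho>))) * X ^ 2"
    and "n \<ge> 1"
  shows "(fps_cmap (\<lambda>x. b * x - a * x * a' * b) ^^ (n - 1)) X
           = fps_const (sc (\<Prod>j=2..n. \<gamma> * (1 - \<rho> ^ (j - 1)))) * X ^ n"
proof (rule funpow_power_raising[OF fps_cmap_screening_left_linear _ \<open>n \<ge> 1\<close>])
  fix m :: nat
  let ?T = "fps_cmap (\<lambda>x. b * x - a * x * a' * b)"
  let ?r = "fps_const (sc \<rho>)" and ?c = "fps_const (sc \<gamma>)"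
  have conj_power: "fps_const a * X ^ m * fps_const a' = ?r ^ m * X ^ m"
    using assms(1,2) conj by (rule conjugate_power_eigen)
  have "?T (X ^ m) = q_commutator (?r ^ m) (fps_const b) (X ^ m)"
    by (simp only: fps_cmap_screening_left q_commutator_def conj_power)
  also have "\<dots> = ?c * (1 - ?r ^ m) * X ^ Suc m"
    using base by (intro q_commutator_power_left fps_const_sc_commute)
      (simp flip: fps_const_sub fps_const_mult)
  finally show "?T (X ^ m) = fps_const (sc (\<gamma> * (1 - \<rho> ^ m))) * X ^ Suc m"
    by (simp flip: fps_const_sub fps_const_mult)
qed

theorem funpow_screening_right:
  assumes "a * a' = 1" "a' * a = 1"
    and conj: "fps_const a * X * fps_const a' = fps_const (sc \<rho>) * X"
    and base: "q_commutator (fps_const (sc \<rho>)) X (fps_const b)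
                 = fps_const (sc (\<gamma> * (1 - \<rho>))) * X ^ 2"
    and "n \<ge> 1"
  shows "(fps_cmap (\<lambda>x. x * b - b * a * x * a') ^^ (n - 1)) X
           = fps_const (sc (\<Prod>j=2..n. \<gamma> * (1 - \<rho> ^ (j - 1)))) * X ^ n"
proof (rule funpow_power_raising[OF fps_cmap_screening_right_linear _ \<open>n \<ge> 1\<close>])
  fix m :: nat
  let ?T = "fps_cmap (\<lambda>x. x * b - b * a * x * a')"
  let ?r = "fps_const (sc \<rho>)" and ?c = "fps_const (sc \<gamma>)"
  have conj_power: "fps_const a * X ^ m * fps_const a' = ?r ^ m * X ^ m"
    using assms(1,2) conj by (rule conjugate_power_eigen)
  have "fps_const b * ?r ^ m = ?r ^ m * fps_const b"
    using fps_const_sc_commute[of "\<rho> ^ m" "fps_const b"] by simp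
  then have "fps_const b * (fps_const a * X ^ m * fps_const a') = ?r ^ m * fps_const b * X ^ m"
    by (simp only: conj_power flip: mult.assoc)
  then have "?T (X ^ m) = q_commutator (?r ^ m) (X ^ m) (fps_const b)"
    unfolding fps_cmap_screening_right q_commutator_def by (simp only: mult.assoc)
  also have "\<dots> = ?c * (1 - ?r ^ m) * X ^ Suc m"
    using base by (intro q_commutator_power_right fps_const_sc_commute)
      (simp flip: fps_const_sub fps_const_mult)
  finally show "?T (X ^ m) = fps_const (sc (\<gamma> * (1 - \<rho> ^ m))) * X ^ Suc m"
    by (simp flip: fps_const_sub fps_const_mult)
qed

lemma St_e0_funpow_e_plus:
  assumes q: "q \<noteq> 0" and two: "(2::'k) \<noteq> 0" and k: "k * kinv = 1" "kinv * k = 1"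
    and ke: "\<And>m. k * e m * kinv = sc (q ^ 2) * e m"
    and ee: "quadratic_exchange (sc (q ^ 2)) e" and "n \<ge> 1"
  shows "(fps_cmap (St_e0 e k kinv) ^^ (n - 1)) (e_plus e)
           = fps_const (sc (\<Prod>j=2..n. 1 - inverse q ^ (2 * (j - 1)))) * e_plus e ^ n"
proof -
  have conj: "fps_const kinv * e_plus e * fps_const k = fps_const (sc (inverse (q ^ 2))) * e_plus e"
    using conjugate_eigen_inverse[OF k _ ke] q by (intro fps_ext) (simp add: e_plus_def)
  have full: "q_commutator (fps_const (sc (q ^ 2))) (fps_const (e 0)) (e_plus e)
      = fps_const (sc (1 - q ^ 2)) * e_plus e ^ 2"
    using e_plus_q_commutator[OF ee add_self_eq_0[OF two]] by simp
  have "q_commutator (fps_const (sc (inverse (q ^ 2)))) (e_plus e) (fps_const (e 0))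
      = fps_const (sc (- (inverse (q ^ 2) * (1 - q ^ 2)))) * e_plus e ^ 2"
    using q by (intro q_commutator_swap_sc[OF _ full]) simp
  also have "- (inverse (q ^ 2) * (1 - q ^ 2)) = 1 * (1 - inverse (q ^ 2))"
    using q by (simp add: field_simps)
  finally have "(fps_cmap (\<lambda>x. x * e 0 - e 0 * kinv * x * k) ^^ (n - 1)) (e_plus e)
      = fps_const (sc (\<Prod>j=2..n. 1 * (1 - inverse (q ^ 2) ^ (j - 1)))) * e_plus e ^ n"
    using k conj \<open>n \<ge> 1\<close> by (intro funpow_screening_right)
  then show ?thesis
    by (simp add: St_e0_def[abs_def] power_mult power_inverse)
qed

lemma S_e0_funpow_e_minus:
  assumes q: "q \<noteq> 0" and two: "(2::'k) \<noteq> 0" and k: "k * kinv = 1" "kinv * k = 1"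
    and ke: "\<And>m. k * e m * kinv = sc (q ^ 2) * e m"
    and ee: "quadratic_exchange (sc (q ^ 2)) e" and "n \<ge> 1"
  shows "(fps_cmap (S_e0 e k kinv) ^^ (n - 1)) (e_minus e)
           = fps_const (sc (\<Prod>j=2..n. 1 - q ^ (2 * (j - 1)))) * e_minus e ^ n"
proof -
  define g where "g = (\<lambda>m. e (- m))"
  have e_minus: "e_minus e = - f_plus g"
    by (rule fps_ext) (simp add: e_minus_def f_plus_def g_def)
  have conj: "fps_const k * e_minus e * fps_const kinv = fps_const (sc (q ^ 2)) * e_minus e"
    by (rule fps_ext) (simp add: e_minus_def ke)
  have "quadratic_exchange (sc (inverse (q ^ 2))) g"
    using quadratic_exchange_reflect[OF ee sc_inverse_mult[of "q ^ 2"]] q by (simp add: g_def)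
  from f_plus_q_commutator[OF this add_self_eq_0[OF two]]
  have truncated: "q_commutator (fps_const (sc (inverse (q ^ 2)))) (f_plus g) (fps_const (e 0))
      = fps_const (sc (inverse (q ^ 2) - 1)) * f_plus g ^ 2"
    by (simp add: g_def)
  have "- (- (q ^ 2 * (inverse (q ^ 2) - 1))) = 1 * (1 - q ^ 2)"
    using q by (simp add: field_simps)
  moreover have "q_commutator (fps_const (sc (q ^ 2))) (fps_const (e 0)) (f_plus g)
      = fps_const (sc (- (q ^ 2 * (inverse (q ^ 2) - 1)))) * f_plus g ^ 2"
    using q by (intro q_commutator_swap_sc[OF _ truncated]) simp
  ultimately have "q_commutator (fps_const (sc (q ^ 2))) (fps_const (e 0)) (e_minus e)
      = fps_const (sc (1 * (1 - q ^ 2))) * e_minus e ^ 2"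
    by (simp only: e_minus q_commutator_uminus_right neg_fps_const_sc_mult power2_minus)
  then have "(fps_cmap (\<lambda>x. e 0 * x - k * x * kinv * e 0) ^^ (n - 1)) (e_minus e)
      = fps_const (sc (\<Prod>j=2..n. 1 * (1 - (q ^ 2) ^ (j - 1)))) * e_minus e ^ n"
    using k conj \<open>n \<ge> 1\<close> by (intro funpow_screening_left)
  then show ?thesis
    by (simp add: S_e0_def[abs_def] power_mult)
qed

lemma S_f0_funpow_f_plus:
  assumes two: "(2::'k) \<noteq> 0" and k: "k * kinv = 1" "kinv * k = 1"
    and kf: "\<And>m. k * f m * kinv = sc (inverse q ^ 2) * f m"
    and ff: "quadratic_exchange (sc (inverse q ^ 2)) f" and "n \<ge> 1"
  shows "(fps_cmap (S_f0 f k kinv) ^^ (n - 1)) (f_plus f)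
           = fps_const (sc (\<Prod>j=2..n. inverse q ^ (2 * (j - 1)) - 1)) * f_plus f ^ n"
proof -
  have conj: "fps_const k * f_plus f * fps_const kinv = fps_const (sc (inverse q ^ 2)) * f_plus f"
    by (rule fps_ext) (simp add: f_plus_def kf)
  have "q_commutator (fps_const (sc (inverse q ^ 2))) (f_plus f) (fps_const (f 0))
      = fps_const (sc (- 1 * (1 - inverse q ^ 2))) * f_plus f ^ 2"
    using f_plus_q_commutator[OF ff add_self_eq_0[OF two]] by simp
  then have "(fps_cmap (\<lambda>x. x * f 0 - f 0 * k * x * kinv) ^^ (n - 1)) (f_plus f)
      = fps_const (sc (\<Prod>j=2..n. - 1 * (1 - (inverse q ^ 2) ^ (j - 1)))) * f_plus f ^ n"
    using k conj \<open>n \<ge> 1\<close> by (intro funpow_screening_right)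
  then show ?thesis
    by (simp add: S_f0_def[abs_def] power_mult)
qed

lemma St_f0_funpow_f_minus:
  assumes q: "q \<noteq> 0" and two: "(2::'k) \<noteq> 0" and k: "k * kinv = 1" "kinv * k = 1"
    and kf: "\<And>m. k * f m * kinv = sc (inverse q ^ 2) * f m"
    and ff: "quadratic_exchange (sc (inverse q ^ 2)) f" and "n \<ge> 1"
  shows "(fps_cmap (St_f0 f k kinv) ^^ (n - 1)) (f_minus f)
           = fps_const (sc (\<Prod>j=2..n. q ^ (2 * (j - 1)) - 1)) * f_minus f ^ n"
proof -
  define g where "g = (\<lambda>m. f (- m))"
  have f_minus: "f_minus f = - e_plus g"
    by (rule fps_ext) (simp add: f_minus_def e_plus_def g_def)
  have conj: "fps_const kinv * f_minus f * fps_const k = fps_const (sc (q ^ 2)) * f_minus f"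
    using conjugate_eigen_inverse[OF k _ kf] q
    by (intro fps_ext) (simp add: f_minus_def power_inverse)
  have "quadratic_exchange (sc (q ^ 2)) g"
    using quadratic_exchange_reflect[OF ff sc_inverse_mult[of "inverse q ^ 2"]] q
    by (simp add: g_def power_inverse)
  from e_plus_q_commutator[OF this add_self_eq_0[OF two]]
  have "q_commutator (fps_const (sc (q ^ 2))) (fps_const (f 0)) (e_plus g)
      = fps_const (sc (1 - q ^ 2)) * e_plus g ^ 2"
    by (simp add: g_def)
  then have "q_commutator (fps_const (sc (q ^ 2))) (fps_const (f 0)) (f_minus f)
      = fps_const (sc (- 1 * (1 - q ^ 2))) * f_minus f ^ 2"
    by (simp only: f_minus q_commutator_uminus_right neg_fps_const_sc_mult power2_minus mult_minus1)
  then have "(fps_cmap (\<lambda>x. f 0 * x - kinv * x * k * f 0) ^^ (n - 1)) (f_minus f)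
      = fps_const (sc (\<Prod>j=2..n. - 1 * (1 - (q ^ 2) ^ (j - 1)))) * f_minus f ^ n"
    using k conj \<open>n \<ge> 1\<close> by (intro funpow_screening_left)
  then show ?thesis
    by (simp add: St_f0_def[abs_def] power_mult)
qed

end

theorem mainTheorem5:
  fixes sc :: "'k::field_char_0 \<Rightarrow> 'a::ring_1"
    and q :: 'k and e f :: "int \<Rightarrow> 'a" and k kinv :: 'a and n :: nat
  assumes alg: "central_scalars sc"
    and q_nz: "q \<noteq> 0"
    and q_nroot: "\<forall>m::nat. m > 0 \<longrightarrow> q ^ m \<noteq> 1"
    and k_inv: "k * kinv = 1" "kinv * k = 1"
    and ke: "\<forall>m. k * e m * kinv = sc (q ^ 2) * e m"
    and kf: "\<forall>m. k * f m * kinv = sc (inverse q ^ 2) * f m"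
    and ee: "\<forall>m l. e (m + 1) * e l - sc (q ^ 2) * e m * e (l + 1)
                 = sc (q ^ 2) * e l * e (m + 1) - e (l + 1) * e m"
    and ff: "\<forall>m l. f (m + 1) * f l - sc (inverse q ^ 2) * f m * f (l + 1)
                 = sc (inverse q ^ 2) * f l * f (m + 1) - f (l + 1) * f m"
    and n: "n \<ge> 1"
  shows "(fps_cmap (St_e0 e k kinv) ^^ (n - 1)) (e_plus e)
           = fps_const (sc (\<Prod>j=2..n. 1 - inverse q ^ (2 * (j - 1)))) * e_plus e ^ n
         \<and> (fps_cmap (S_e0 e k kinv) ^^ (n - 1)) (e_minus e)
           = fps_const (sc (\<Prod>j=2..n. 1 - q ^ (2 * (j - 1)))) * e_minus e ^ n
         \<and> (fps_cmap (S_f0 f k kinv) ^^ (n - 1)) (f_plus f)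
           = fps_const (sc (\<Prod>j=2..n. inverse q ^ (2 * (j - 1)) - 1)) * f_plus f ^ n
         \<and> (fps_cmap (St_f0 f k kinv) ^^ (n - 1)) (f_minus f)
           = fps_const (sc (\<Prod>j=2..n. q ^ (2 * (j - 1)) - 1)) * f_minus f ^ n"
proof -
  \<comment> \<open>the identities hold for every nonzero \<open>q\<close>\<close>
  interpret central_scalar_algebra sc
    by (rule central_scalar_algebra.intro) (rule alg)
  have two: "(2::'k) \<noteq> 0"
    by simp
  have "quadratic_exchange (sc (q ^ 2)) e" "quadratic_exchange (sc (inverse q ^ 2)) f"
    using ee ff unfolding quadratic_exchange_def .
  then show ?thesis
    using q_nz two k_inv ke kf n
    by (intro conjI St_e0_funpow_e_plus S_e0_funpow_e_minus S_f0_funpow_f_plus St_f0_funpow_f_minus)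
      simp_all
qed

end
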